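(* Let $c\ge 2$ be the number of colors. Suppose a board with $m$ rows and $n$ columns has a perfect layout, and let $p$ and $q$ be respectively the number of rows and the number of columns that contain at least one sink. Then $$c(m+n)+(c-2)(p+q)\le mn-c.$$
   Context: A board is an $m\times n$ grid of unit cells in which exactly $c$ cells are sinks, one of each of $c$ colors, and all other cells are empty. A layout places, in some of the empty cells, arrows, each having one of the $c$ colors and one of the four cardinal directions. A packet of color $i$ may enter the grid through any unit edge of the outer boundary of the grid, into the adjacent cell, moving perpendicular to that edge into the grid; it moves one cell at a time in its current direction, and whenever it enters a cell containing an arrow of color $i$ its direction becomes that arrow's direction (arrows of other colors are ignored). The packet succeeds if it enters the sink of color $i$; it fails if it enters a sink of another color, leaves the grid, or travels forever without reaching a sink. A perfect layout is a layout in which every packet of every color entering through every boundary edge succeeds. *)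

theory Defs
  imports Main
begin

text \<open>Cells of an m x n board are pairs (row, column) of integers with
  0 <= row < m and 0 <= column < n. Integer coordinates allow a packet to
  step outside the grid. Colors are the naturals 0..c-1.\<close>

datatype dir = North | South | East | West

fun delta :: "dir \<Rightarrow> int \<times> int" where
  "delta North = (-1, 0)"
| "delta South = (1, 0)"
| "delta East = (0, 1)"
| "delta West = (0, -1)"

definition in_grid :: "nat \<Rightarrow> nat \<Rightarrow> int \<times> int \<Rightarrow> bool" where
  "in_grid m n p \<longleftrightarrow> 0 \<le> fst p \<and> fst p < int m \<and> 0 \<le> snd p \<and> snd p < int n"

definition board :: "nat \<Rightarrow> nat \<Rightarrow> nat \<Rightarrow> (nat \<Rightarrow> int \<times> int) \<Rightarrow> bool" where
  "board m n c sink \<longleftrightarrow> (\<forall>k<c. in_grid m n (sink k)) \<and> inj_on sink {..<c}"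

definition is_sink :: "nat \<Rightarrow> (nat \<Rightarrow> int \<times> int) \<Rightarrow> int \<times> int \<Rightarrow> bool" where
  "is_sink c sink p \<longleftrightarrow> (\<exists>k<c. sink k = p)"

definition layout :: "nat \<Rightarrow> nat \<Rightarrow> nat \<Rightarrow> (nat \<Rightarrow> int \<times> int)
    \<Rightarrow> (int \<times> int \<Rightarrow> (nat \<times> dir) option) \<Rightarrow> bool" where
  "layout m n c sink arr \<longleftrightarrow>
     (\<forall>p a. arr p = Some a \<longrightarrow> in_grid m n p \<and> \<not> is_sink c sink p \<and> fst a < c)"

text \<open>State of a packet: the cell it has just entered and its current direction.
  One step: the packet processes the arrow (if of its color) in the cell it
  has entered, then moves to the next cell.\<close>
definition step :: "(int \<times> int \<Rightarrow> (nat \<times> dir) option) \<Rightarrow> nat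
    \<Rightarrow> (int \<times> int) \<times> dir \<Rightarrow> (int \<times> int) \<times> dir" where
  "step arr col s =
     (let p = fst s;
          d' = (case arr p of Some (k, e) \<Rightarrow> if k = col then e else snd s | None \<Rightarrow> snd s)
      in ((fst p + fst (delta d'), snd p + snd (delta d')), d'))"

definition succeeds :: "nat \<Rightarrow> nat \<Rightarrow> nat \<Rightarrow> (nat \<Rightarrow> int \<times> int)
    \<Rightarrow> (int \<times> int \<Rightarrow> (nat \<times> dir) option) \<Rightarrow> nat \<Rightarrow> (int \<times> int) \<times> dir \<Rightarrow> bool" where
  "succeeds m n c sink arr col s0 \<longleftrightarrow>
     (\<exists>t. fst ((step arr col ^^ t) s0) = sink col \<and>
          (\<forall>u<t. in_grid m n (fst ((step arr col ^^ u) s0))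
                 \<and> \<not> is_sink c sink (fst ((step arr col ^^ u) s0))))"

definition entries :: "nat \<Rightarrow> nat \<Rightarrow> ((int \<times> int) \<times> dir) set" where
  "entries m n =
     {((int i, 0), East) | i. i < m} \<union> {((int i, int n - 1), West) | i. i < m}
   \<union> {((0, int j), South) | j. j < n} \<union> {((int m - 1, int j), North) | j. j < n}"

definition perfect :: "nat \<Rightarrow> nat \<Rightarrow> nat \<Rightarrow> (nat \<Rightarrow> int \<times> int)
    \<Rightarrow> (int \<times> int \<Rightarrow> (nat \<times> dir) option) \<Rightarrow> bool" where
  "perfect m n c sink arr \<longleftrightarrow> layout m n c sink arr \<and>
     (\<forall>col<c. \<forall>s\<in>entries m n. succeeds m n c sink arr col s)"

end

theory Submission
  imports Defs
begin

text \<open>Follow the packet of color i entering through a boundary edge until the first arrow of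
  color i that changes its direction, its first turn. Of the two packets of a color entering a row
  from the left and from the right, each has a first turn unless it runs straight into its own
  sink, which happens for at most one color per entry. In a row without sinks every color has a
  first turn; in a row with a sink the two first turns lie on opposite sides of it, hence are
  distinct. So the row entries give at least c m + (c - 2) p first turns, and the column entries
  (by transposing the board) at least c n + (c - 2) q. No arrow is the first turn of both a row
  entry and a column entry of its color: it differs from a horizontal and a vertical direction,
  so it reverses one of the two packets, which is then trapped between the boundary and that
  arrow. All these arrows lie in the m n - c cells that are not sinks.\<close>

section \<open>Straight motion and first turns\<close>

definition ray :: "int \<times> int \<Rightarrow> dir \<Rightarrow> int \<Rightarrow> int \<times> int" where
  "ray p d j = (fst p + j * fst (delta d), snd p + j * snd (delta d))"

fun opp :: "dir \<Rightarrow> dir" where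
  "opp North = South" | "opp South = North" | "opp East = West" | "opp West = East"

lemma ray_0 [simp]: "ray p d 0 = p"
  by (simp add: ray_def)

lemma ray_East [simp]: "ray (a, b) East k = (a, b + k)"
  and ray_West [simp]: "ray (a, b) West k = (a, b - k)"
  and ray_South [simp]: "ray (a, b) South k = (a + k, b)"
  and ray_North [simp]: "ray (a, b) North k = (a - k, b)"
  by (simp_all add: ray_def)

lemma ray_forward:
  "(fst (ray p d j) + fst (delta d), snd (ray p d j) + snd (delta d)) = ray p d (j + 1)"
  by (simp add: ray_def algebra_simps)

lemma ray_backward:
  "(fst (ray p d j) + fst (delta (opp d)), snd (ray p d j) + snd (delta (opp d))) = ray p d (j - 1)"
  by (cases d) (simp_all add: ray_def algebra_simps)

lemma step_keeps_direction:
  assumes "\<forall>e. arr q = Some (col, e) \<longrightarrow> e = d"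
  shows "step arr col (q, d) = ((fst q + fst (delta d), snd q + snd (delta d)), d)"
  using assms by (auto simp: step_def split: option.split)

lemma step_follows_arrow:
  assumes "arr q = Some (col, e)"
  shows "step arr col (q, f) = ((fst q + fst (delta e), snd q + snd (delta e)), e)"
  using assms by (simp add: step_def)

lemma funpow_step_straight:
  assumes "\<forall>j<k. \<forall>e. arr (ray p d (int j)) = Some (col, e) \<longrightarrow> e = d"
  shows "(step arr col ^^ k) (p, d) = (ray p d (int k), d)"
  using assms
proof (induction k)
  case (Suc k)
  have "(step arr col ^^ k) (p, d) = (ray p d (int k), d)"
    using Suc.IH Suc.prems less_SucI by blast
  moreover have "\<forall>e. arr (ray p d (int k)) = Some (col, e) \<longrightarrow> e = d"
    using Suc.prems lessI by blast
  ultimately show ?case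
    by (simp add: step_keeps_direction ray_def algebra_simps)
qed simp

definition first_turn :: "nat \<Rightarrow> nat \<Rightarrow> nat \<Rightarrow> (nat \<Rightarrow> int \<times> int)
    \<Rightarrow> (int \<times> int \<Rightarrow> (nat \<times> dir) option) \<Rightarrow> nat \<Rightarrow> int \<times> int \<Rightarrow> dir \<Rightarrow> int \<Rightarrow> bool" where
  "first_turn m n c sink arr i p d k \<longleftrightarrow> 0 \<le> k \<and> in_grid m n (ray p d k) \<and>
     (\<exists>e. e \<noteq> d \<and> arr (ray p d k) = Some (i, e)) \<and>
     (\<forall>j. 0 \<le> j \<and> j < k \<longrightarrow> in_grid m n (ray p d j) \<and> \<not> is_sink c sink (ray p d j)
         \<and> (\<forall>e. arr (ray p d j) = Some (i, e) \<longrightarrow> e = d))"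

lemma funpow_step_first_turn:
  assumes "first_turn m n c sink arr i p d k" and "j \<le> nat k"
  shows "(step arr i ^^ j) (p, d) = (ray p d (int j), d)"
proof (rule funpow_step_straight, intro allI impI)
  fix j' e assume "j' < j" and "arr (ray p d (int j')) = Some (i, e)"
  moreover have "0 \<le> int j' \<and> int j' < k" using \<open>j' < j\<close> assms(2) by linarith
  ultimately show "e = d" using assms(1) unfolding first_turn_def by blast
qed

lemma first_turn_not_sink:
  assumes "layout m n c sink arr" and "first_turn m n c sink arr i p d k" and "0 \<le> j" and "j \<le> k"
  shows "\<not> is_sink c sink (ray p d j)"
proof (cases "j = k")
  case True
  obtain e where "arr (ray p d k) = Some (i, e)" using assms(2) unfolding first_turn_def by blast
  then show ?thesis using assms(1) True unfolding layout_def by blast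
next
  case False
  then show ?thesis using assms(2-4) unfolding first_turn_def by auto
qed

lemma succeeds_first_turn_or_sink:
  assumes lay: "layout m n c sink arr" and succ: "succeeds m n c sink arr i (p, d)"
  shows "(\<exists>k. first_turn m n c sink arr i p d k) \<or>
         (\<exists>k. 0 \<le> k \<and> sink i = ray p d k \<and> (\<forall>j. 0 \<le> j \<and> j < k \<longrightarrow> \<not> is_sink c sink (ray p d j)))"
proof -
  obtain t where t_sink: "fst ((step arr i ^^ t) (p, d)) = sink i" and
    before_t: "\<forall>u<t. in_grid m n (fst ((step arr i ^^ u) (p, d)))
                     \<and> \<not> is_sink c sink (fst ((step arr i ^^ u) (p, d)))"
    using succ unfolding succeeds_def by blast
  define stop where
    "stop j \<longleftrightarrow> ray p d (int j) = sink i \<or> (\<exists>e. e \<noteq> d \<and> arr (ray p d (int j)) = Some (i, e))"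
    for j :: nat
  have straight: "(step arr i ^^ j) (p, d) = (ray p d (int j), d)" if "\<forall>j'<j. \<not> stop j'" for j
    using that by (intro funpow_step_straight) (auto simp: stop_def)
  have "\<exists>j\<le>t. stop j"
  proof (rule ccontr)
    assume "\<not> (\<exists>j\<le>t. stop j)"
    then have "stop t" using straight[of t] t_sink by (auto simp: stop_def)
    with \<open>\<not> (\<exists>j\<le>t. stop j)\<close> show False by blast
  qed
  then obtain k where k_le: "k \<le> t" and "stop k" and not_stop: "\<forall>j<k. \<not> stop j"
    by (metis (full_types) LeastI Least_le not_less_Least order_trans)
  have before_k: "in_grid m n (ray p d j) \<and> \<not> is_sink c sink (ray p d j)
      \<and> (\<forall>e. arr (ray p d j) = Some (i, e) \<longrightarrow> e = d)" if "0 \<le> j" "j < int k" for j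
  proof -
    have "nat j < t" and "\<forall>j'<nat j. \<not> stop j'" using that k_le not_stop by auto
    then have "in_grid m n (ray p d j) \<and> \<not> is_sink c sink (ray p d j)"
      using before_t straight[of "nat j"] that(1) by force
    moreover have "\<not> stop (nat j)" using not_stop that by auto
    ultimately show ?thesis using that(1) by (auto simp: stop_def)
  qed
  show ?thesis
  proof (cases "ray p d (int k) = sink i")
    case True
    then show ?thesis using before_k by (intro disjI2 exI[of _ "int k"]) auto
  next
    case False
    then obtain e where "e \<noteq> d" "arr (ray p d (int k)) = Some (i, e)"
      using \<open>stop k\<close> by (auto simp: stop_def)
    moreover from this have "in_grid m n (ray p d (int k))" using lay unfolding layout_def by blast
    ultimately show ?thesis using before_k unfolding first_turn_def
      by (intro disjI1 exI[of _ "int k"]) auto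
  qed
qed

text \<open>A packet sent back by the arrow at its first turn stays on the ray between the cell just
  outside the grid (index -1) and the turning cell.\<close>
definition trapped_on_ray :: "int \<times> int \<Rightarrow> dir \<Rightarrow> int \<Rightarrow> (int \<times> int) \<times> dir \<Rightarrow> bool" where
  "trapped_on_ray p d k s \<longleftrightarrow>
     (\<exists>j. -1 \<le> j \<and> j < k \<and> s = (ray p d j, opp d)) \<or> (\<exists>j. 0 \<le> j \<and> j < k \<and> s = (ray p d j, d))
     \<or> fst s = ray p d k"

lemma trapped_on_ray_step:
  assumes turn: "first_turn m n c sink arr i p d k" and outside: "\<not> in_grid m n (ray p d (-1))"
    and reverses: "arr (ray p d k) = Some (i, opp d)"
    and trapped: "trapped_on_ray p d k s" and inside: "in_grid m n (fst s)"
  shows "trapped_on_ray p d k (step arr i s)"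
proof -
  have arrows_forward: "\<forall>e. arr (ray p d j) = Some (i, e) \<longrightarrow> e = d" if "0 \<le> j" "j < k" for j
    using turn that unfolding first_turn_def by blast
  have forward: "trapped_on_ray p d k (ray p d (j + 1), d)" if "0 \<le> j" "j < k" for j
  proof (cases "j + 1 < k")
    case True
    then show ?thesis using that unfolding trapped_on_ray_def
      by (intro disjI2 disjI1 exI[of _ "j + 1"]) auto
  next
    case False
    with that have "j + 1 = k" by simp
    then show ?thesis unfolding trapped_on_ray_def by simp
  qed
  from trapped show ?thesis
    unfolding trapped_on_ray_def[of p d k s]
  proof (elim disjE exE conjE)
    fix j assume j: "-1 \<le> j" "j < k" and s: "s = (ray p d j, opp d)"
    have "0 \<le> j" using inside outside j s by (cases "j = -1") auto
    show ?thesis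
    proof (cases "arr (ray p d j) = Some (i, d)")
      case True
      then show ?thesis using forward[OF \<open>0 \<le> j\<close> j(2)] s
        by (simp add: step_follows_arrow ray_forward)
    next
      case False
      then have "\<forall>e. arr (ray p d j) = Some (i, e) \<longrightarrow> e = opp d"
        using arrows_forward[OF \<open>0 \<le> j\<close> j(2)] by blast
      then have "step arr i s = (ray p d (j - 1), opp d)"
        using s by (simp add: step_keeps_direction ray_backward)
      then show ?thesis using j \<open>0 \<le> j\<close> unfolding trapped_on_ray_def
        by (intro disjI1 exI[of _ "j - 1"]) auto
    qed
  next
    fix j assume j: "0 \<le> j" "j < k" and s: "s = (ray p d j, d)"
    then show ?thesis using forward[OF j] arrows_forward[OF j]
      by (simp add: step_keeps_direction ray_forward)
  next
    assume "fst s = ray p d k"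
    then have "step arr i s = (ray p d (k - 1), opp d)"
      using reverses by (cases s) (simp add: step_follows_arrow ray_backward)
    moreover have "0 \<le> k" using turn unfolding first_turn_def by simp
    ultimately show ?thesis unfolding trapped_on_ray_def by (intro disjI1 exI[of _ "k - 1"]) auto
  qed
qed

lemma reversed_packet_misses_sink:
  assumes lay: "layout m n c sink arr" and bd: "board m n c sink" and "i < c"
    and turn: "first_turn m n c sink arr i p d k" and outside: "\<not> in_grid m n (ray p d (-1))"
    and reverses: "arr (ray p d k) = Some (i, opp d)"
    and inside: "\<forall>u<t. in_grid m n (fst ((step arr i ^^ u) (ray p d k, f)))"
  shows "fst ((step arr i ^^ t) (ray p d k, f)) \<noteq> sink i"
proof -
  have "u \<le> t \<Longrightarrow> trapped_on_ray p d k ((step arr i ^^ u) (ray p d k, f))" for u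
  proof (induction u)
    case (Suc u)
    then show ?case using trapped_on_ray_step[OF turn outside reverses] inside by simp
  qed (simp add: trapped_on_ray_def)
  then have "trapped_on_ray p d k ((step arr i ^^ t) (ray p d k, f))" by simp
  moreover have "fst s \<noteq> sink i" if trapped: "trapped_on_ray p d k s" for s
  proof -
    have "0 \<le> k" using turn unfolding first_turn_def by simp
    have "in_grid m n (sink i)" "is_sink c sink (sink i)"
      using bd \<open>i < c\<close> unfolding board_def is_sink_def by auto
    then have "ray p d j \<noteq> sink i" if "-1 \<le> j" "j \<le> k" for j
      using first_turn_not_sink[OF lay turn, of j] outside that by (cases "j = -1") auto
    then show ?thesis
      using trapped \<open>0 \<le> k\<close> unfolding trapped_on_ray_def by (elim disjE exE conjE) auto
  qed
  ultimately show ?thesis by blast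
qed

text \<open>An arrow differing from a horizontal and from a vertical direction reverses one of them.
  So if a cell is the first turn of color i for a horizontal and for a vertical entry, the
  horizontal packet, reaching that cell, is sent back onto one of the two rays and trapped there.\<close>
lemma shared_first_turn_not_succeeds:
  assumes lay: "layout m n c sink arr" and bd: "board m n c sink" and "i < c"
    and turn1: "first_turn m n c sink arr i p1 d1 k1"
    and turn2: "first_turn m n c sink arr i p2 d2 k2"
    and out1: "\<not> in_grid m n (ray p1 d1 (-1))" and out2: "\<not> in_grid m n (ray p2 d2 (-1))"
    and same: "ray p1 d1 k1 = ray p2 d2 k2"
    and horizontal: "d1 = East \<or> d1 = West" and vertical: "d2 = North \<or> d2 = South"
  shows "\<not> succeeds m n c sink arr i (p1, d1)"
proof
  assume "succeeds m n c sink arr i (p1, d1)"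
  then obtain t where t_sink: "fst ((step arr i ^^ t) (p1, d1)) = sink i" and
    inside: "\<forall>u<t. in_grid m n (fst ((step arr i ^^ u) (p1, d1)))"
    unfolding succeeds_def by blast
  obtain e where e: "arr (ray p1 d1 k1) = Some (i, e)" "e \<noteq> d1" "e \<noteq> d2"
    using turn1 turn2 same unfolding first_turn_def by auto
  then have reverses: "e = opp d1 \<or> e = opp d2" using horizontal vertical by (cases e) auto
  have "0 \<le> k1" using turn1 unfolding first_turn_def by simp
  have "is_sink c sink (sink i)" using \<open>i < c\<close> unfolding is_sink_def by auto
  show False
  proof (cases "t \<le> nat k1")
    case True
    then show False
      using funpow_step_first_turn[OF turn1 True] first_turn_not_sink[OF lay turn1, of "int t"]
        t_sink \<open>is_sink c sink (sink i)\<close> \<open>0 \<le> k1\<close> by simp linarith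
  next
    case False
    define t' where "t' = t - nat k1"
    have at_turn: "(step arr i ^^ (u + nat k1)) (p1, d1) = (step arr i ^^ u) (ray p1 d1 k1, d1)"
      for u
      using funpow_step_first_turn[OF turn1, of "nat k1"] \<open>0 \<le> k1\<close> by (simp add: funpow_add)
    have "t = t' + nat k1" using False unfolding t'_def by simp
    then have "fst ((step arr i ^^ t') (ray p1 d1 k1, d1)) = sink i"
      and "\<forall>u<t'. in_grid m n (fst ((step arr i ^^ u) (ray p1 d1 k1, d1)))"
      using t_sink inside at_turn by (metis, metis add_less_cancel_right)
    then show False
      using reverses reversed_packet_misses_sink[OF lay bd \<open>i < c\<close> turn1 out1, of t' d1]
        reversed_packet_misses_sink[OF lay bd \<open>i < c\<close> turn2 out2, of t' d1] e(1) same
      by auto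
  qed
qed

section \<open>Transposing the board\<close>

fun transpose_dir :: "dir \<Rightarrow> dir" where
  "transpose_dir North = West" | "transpose_dir West = North"
| "transpose_dir South = East" | "transpose_dir East = South"

definition transpose_layout ::
    "(int \<times> int \<Rightarrow> (nat \<times> dir) option) \<Rightarrow> int \<times> int \<Rightarrow> (nat \<times> dir) option" where
  "transpose_layout arr x = map_option (map_prod id transpose_dir) (arr (prod.swap x))"

definition transpose_state :: "(int \<times> int) \<times> dir \<Rightarrow> (int \<times> int) \<times> dir" where
  "transpose_state = map_prod prod.swap transpose_dir"

lemma transpose_dir_transpose_dir [simp]: "transpose_dir (transpose_dir d) = d"
  by (cases d) auto

lemma transpose_state_transpose_state [simp]: "transpose_state (transpose_state s) = s"
  by (cases s) (simp add: transpose_state_def)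

lemma swap_eq_swap_iff [simp]: "prod.swap x = prod.swap y \<longleftrightarrow> x = y"
  by (metis swap_swap)

lemma delta_transpose_dir: "delta (transpose_dir d) = prod.swap (delta d)"
  by (cases d) auto

lemma ray_transpose: "ray (prod.swap p) (transpose_dir d) j = prod.swap (ray p d j)"
  by (simp add: ray_def delta_transpose_dir prod.swap_def)

lemma in_grid_swap [simp]: "in_grid n m (prod.swap x) = in_grid m n x"
  by (auto simp: in_grid_def)

lemma is_sink_swap [simp]: "is_sink c (prod.swap \<circ> sink) (prod.swap x) = is_sink c sink x"
  by (auto simp: is_sink_def)

lemma transpose_layout_swap_eq_Some:
  "transpose_layout arr (prod.swap x) = Some (i, e')
     \<longleftrightarrow> (\<exists>e. arr x = Some (i, e) \<and> e' = transpose_dir e)"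
  by (auto simp: transpose_layout_def)

lemma step_transpose:
  "step (transpose_layout arr) col (transpose_state s) = transpose_state (step arr col s)"
  by (cases s) (auto simp: step_def transpose_state_def transpose_layout_def Let_def
      delta_transpose_dir prod.swap_def split: option.split)

lemma succeeds_transpose:
  "succeeds n m c (prod.swap \<circ> sink) (transpose_layout arr) col (transpose_state s)
     = succeeds m n c sink arr col s"
proof -
  have "(step (transpose_layout arr) col ^^ t) (transpose_state s)
      = transpose_state ((step arr col ^^ t) s)"
    for t by (induction t) (simp_all add: step_transpose)
  then show ?thesis by (simp add: succeeds_def transpose_state_def)
qed

lemma first_turn_transpose:
  "first_turn n m c (prod.swap \<circ> sink) (transpose_layout arr) i (prod.swap p) (transpose_dir d) k
     = first_turn m n c sink arr i p d k"
  unfolding first_turn_def ray_transpose in_grid_swap is_sink_swap transpose_layout_swap_eq_Some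
  by (metis transpose_dir_transpose_dir)

lemma layout_transpose:
  assumes "layout m n c sink arr"
  shows "layout n m c (prod.swap \<circ> sink) (transpose_layout arr)"
  unfolding layout_def
proof (intro allI impI)
  fix x a assume "transpose_layout arr x = Some a"
  then obtain e where "arr (prod.swap x) = Some (fst a, e)"
    by (auto simp: transpose_layout_def)
  then show "in_grid n m x \<and> \<not> is_sink c (prod.swap \<circ> sink) x \<and> fst a < c"
    using assms unfolding layout_def by (metis fst_conv in_grid_swap is_sink_swap swap_swap)
qed

lemma board_transpose: "board m n c sink \<Longrightarrow> board n m c (prod.swap \<circ> sink)"
  unfolding board_def by (auto simp: inj_on_def)

section \<open>Counting first turns\<close>

definition row_entries :: "nat \<Rightarrow> nat \<Rightarrow> ((int \<times> int) \<times> dir) set" where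
  "row_entries m n = {((int i, 0), East) | i. i < m} \<union> {((int i, int n - 1), West) | i. i < m}"

lemma entries_eq_row_entries: "entries m n = row_entries m n \<union> transpose_state ` row_entries n m"
  unfolding entries_def row_entries_def transpose_state_def by (auto simp: image_Un image_Collect)

lemma row_entries_memI:
  assumes "0 \<le> r" and "r < int m"
  shows "((r, 0), East) \<in> row_entries m n" and "((r, int n - 1), West) \<in> row_entries m n"
  using assms unfolding row_entries_def by (auto intro!: exI[of _ "nat r"])

definition arrow_cells ::
    "nat \<Rightarrow> nat \<Rightarrow> (int \<times> int \<Rightarrow> (nat \<times> dir) option) \<Rightarrow> nat \<Rightarrow> (int \<times> int) set" where
  "arrow_cells m n arr i = {x. in_grid m n x \<and> (\<exists>e. arr x = Some (i, e))}"

definition row_turns :: "nat \<Rightarrow> nat \<Rightarrow> nat \<Rightarrow> (nat \<Rightarrow> int \<times> int)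
    \<Rightarrow> (int \<times> int \<Rightarrow> (nat \<times> dir) option) \<Rightarrow> nat \<Rightarrow> int \<Rightarrow> (int \<times> int) set" where
  "row_turns m n c sink arr i r =
     {ray (r, 0) East k | k. first_turn m n c sink arr i (r, 0) East k}
   \<union> {ray (r, int n - 1) West k | k. first_turn m n c sink arr i (r, int n - 1) West k}"

definition row_turn_cells :: "nat \<Rightarrow> nat \<Rightarrow> nat \<Rightarrow> (nat \<Rightarrow> int \<times> int)
    \<Rightarrow> (int \<times> int \<Rightarrow> (nat \<times> dir) option) \<Rightarrow> nat \<Rightarrow> (int \<times> int) set" where
  "row_turn_cells m n c sink arr i = (\<Union>r\<in>{0..<int m}. row_turns m n c sink arr i r)"

lemma grid_eq_product: "{x. in_grid m n x} = {0..<int m} \<times> {0..<int n}"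
  by (auto simp: in_grid_def)

lemma finite_arrow_cells: "finite (arrow_cells m n arr i)"
  by (rule finite_subset[of _ "{0..<int m} \<times> {0..<int n}"]) (auto simp: arrow_cells_def in_grid_def)

lemma row_turns_subset: "row_turns m n c sink arr i r \<subseteq> arrow_cells m n arr i \<inter> {x. fst x = r}"
  unfolding row_turns_def arrow_cells_def first_turn_def by auto

lemma finite_row_turns: "finite (row_turns m n c sink arr i r)"
  using row_turns_subset by (rule finite_subset) (simp add: finite_arrow_cells)

lemma card_row_turn_cells:
  "card (row_turn_cells m n c sink arr i) = (\<Sum>r\<in>{0..<int m}. card (row_turns m n c sink arr i r))"
  unfolding row_turn_cells_def
proof (rule card_UN_disjoint)
  show "\<forall>r\<in>{0..<int m}. \<forall>r'\<in>{0..<int m}. r \<noteq> r'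
      \<longrightarrow> row_turns m n c sink arr i r \<inter> row_turns m n c sink arr i r' = {}"
    using row_turns_subset[of m n c sink arr i] by blast
qed (simp_all add: finite_row_turns)

lemma row_turn_cells_subset: "row_turn_cells m n c sink arr i \<subseteq> arrow_cells m n arr i"
  unfolding row_turn_cells_def using row_turns_subset by blast

text \<open>Only the color of the first sink met on a ray can miss a first turn on it.\<close>
lemma card_colors_without_first_turn:
  assumes lay: "layout m n c sink arr" and bd: "board m n c sink"
    and succ: "\<forall>i<c. succeeds m n c sink arr i (p, d)"
  shows "card {i\<in>{..<c}. \<not> (\<exists>k. first_turn m n c sink arr i p d k)} \<le> 1"
proof -
  let ?S = "{i\<in>{..<c}. \<not> (\<exists>k. first_turn m n c sink arr i p d k)}"
  have on_ray: "\<exists>k. 0 \<le> k \<and> sink i = ray p d k \<and> (\<forall>j. 0 \<le> j \<and> j < k \<longrightarrow> \<not> is_sink c sink (ray p d j))"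
    if "i \<in> ?S" for i
    using succeeds_first_turn_or_sink[OF lay, of i p d] succ that by auto
  have "i = i'" if i: "i \<in> ?S" and i': "i' \<in> ?S" for i i'
  proof -
    obtain k where k: "0 \<le> k" "sink i = ray p d k"
      "\<forall>j. 0 \<le> j \<and> j < k \<longrightarrow> \<not> is_sink c sink (ray p d j)"
      using on_ray[OF i] by blast
    obtain k' where k': "0 \<le> k'" "sink i' = ray p d k'"
      "\<forall>j. 0 \<le> j \<and> j < k' \<longrightarrow> \<not> is_sink c sink (ray p d j)"
      using on_ray[OF i'] by blast
    have "is_sink c sink (sink i)" "is_sink c sink (sink i')" using i i' unfolding is_sink_def
      by auto
    then have "\<not> k < k'" "\<not> k' < k" using k k' by auto
    then have "sink i = sink i'" using k k' by simp
    then show "i = i'" using bd i i' unfolding board_def inj_on_def by blast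
  qed
  then show ?thesis by (simp add: card_le_Suc0_iff_eq)
qed

lemma colors_with_first_turn:
  assumes "layout m n c sink arr" and "board m n c sink"
    and "\<forall>i<c. succeeds m n c sink arr i (p, d)"
  shows "int c \<le> int (card ({..<c} \<inter> {i. \<exists>k. first_turn m n c sink arr i p d k})) + 1"
proof -
  let ?T = "{..<c} \<inter> {i. \<exists>k. first_turn m n c sink arr i p d k}"
  let ?S = "{i\<in>{..<c}. \<not> (\<exists>k. first_turn m n c sink arr i p d k)}"
  have "?T \<union> ?S = {..<c}" by blast
  then have "c = card (?T \<union> ?S)" by simp
  also have "\<dots> \<le> card ?T + card ?S" by (rule card_Un_le)
  finally show ?thesis using card_colors_without_first_turn[OF assms] by linarith
qed

lemma card_row_turns_sinkless_row:
  assumes lay: "layout m n c sink arr" and "i < c" and no_sink: "r \<notin> fst ` sink ` {..<c}"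
    and succ: "succeeds m n c sink arr i ((r, 0), East)"
  shows "1 \<le> card (row_turns m n c sink arr i r)"
proof -
  have "sink i \<noteq> ray (r, 0) East k" for k
    using no_sink \<open>i < c\<close> by (metis fst_conv image_eqI lessThan_iff ray_East)
  then obtain k where "first_turn m n c sink arr i (r, 0) East k"
    using succeeds_first_turn_or_sink[OF lay succ] by blast
  then have "row_turns m n c sink arr i r \<noteq> {}" unfolding row_turns_def by blast
  then show ?thesis using finite_row_turns by (simp add: Suc_le_eq card_gt_0_iff)
qed

text \<open>In a row containing a sink, the first turns from the left and from the right lie on
  opposite sides of that sink.\<close>
lemma card_row_turns_sink_row:
  assumes lay: "layout m n c sink arr" and bd: "board m n c sink"
    and sink_row: "r \<in> fst ` sink ` {..<c}"
  shows "of_bool (\<exists>k. first_turn m n c sink arr i (r, 0) East k)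
       + of_bool (\<exists>k. first_turn m n c sink arr i (r, int n - 1) West k)
       \<le> int (card (row_turns m n c sink arr i r))"
proof -
  let ?L = "{ray (r, 0) East k | k. first_turn m n c sink arr i (r, 0) East k}"
  let ?R = "{ray (r, int n - 1) West k | k. first_turn m n c sink arr i (r, int n - 1) West k}"
  obtain j z where "j < c" "sink j = (r, z)"
    using sink_row by (metis imageE lessThan_iff prod.collapse)
  then have "0 \<le> z" "z < int n" "is_sink c sink (r, z)"
    using bd unfolding board_def in_grid_def is_sink_def by force+
  have "k1 < z" if "first_turn m n c sink arr i (r, 0) East k1" for k1
    using first_turn_not_sink[OF lay that, of z] \<open>0 \<le> z\<close> \<open>is_sink c sink (r, z)\<close> by force
  moreover have "k2 < int n - 1 - z" if "first_turn m n c sink arr i (r, int n - 1) West k2" for k2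
    using first_turn_not_sink[OF lay that, of "int n - 1 - z"] \<open>z < int n\<close> \<open>is_sink c sink (r, z)\<close>
    by force
  ultimately have "?L \<inter> ?R = {}" by force
  moreover have "finite ?L" "finite ?R"
    using finite_row_turns[of m n c sink arr i r] unfolding row_turns_def by simp_all
  ultimately have "card (row_turns m n c sink arr i r) = card ?L + card ?R"
    unfolding row_turns_def by (simp add: card_Un_disjoint)
  moreover have "of_bool (\<exists>k. first_turn m n c sink arr i (r, 0) East k) \<le> int (card ?L)"
    using \<open>finite ?L\<close> by (auto simp: Suc_le_eq card_gt_0_iff)
  moreover have "of_bool (\<exists>k. first_turn m n c sink arr i (r, int n - 1) West k) \<le> int (card ?R)"
    using \<open>finite ?R\<close> by (auto simp: Suc_le_eq card_gt_0_iff)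
  ultimately show ?thesis by linarith
qed

lemma sum_card_row_turns:
  assumes lay: "layout m n c sink arr" and bd: "board m n c sink"
    and left: "\<forall>i<c. succeeds m n c sink arr i ((r, 0), East)"
    and right: "\<forall>i<c. succeeds m n c sink arr i ((r, int n - 1), West)"
  shows "int c + (int c - 2) * of_bool (r \<in> fst ` sink ` {..<c})
           \<le> (\<Sum>i<c. int (card (row_turns m n c sink arr i r)))"
proof (cases "r \<in> fst ` sink ` {..<c}")
  case False
  then have "(\<Sum>i<c. 1) \<le> (\<Sum>i<c. int (card (row_turns m n c sink arr i r)))"
    using card_row_turns_sinkless_row[OF lay _ False] left by (intro sum_mono) simp
  then show ?thesis using False by simp
next
  case True
  let ?L = "\<lambda>i. \<exists>k. first_turn m n c sink arr i (r, 0) East k"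
  let ?R = "\<lambda>i. \<exists>k. first_turn m n c sink arr i (r, int n - 1) West k"
  have "int (card ({..<c} \<inter> {i. ?L i})) + int (card ({..<c} \<inter> {i. ?R i}))
      = (\<Sum>i<c. of_bool (?L i) + of_bool (?R i))"
    by (simp add: sum.distrib)
  also have "\<dots> \<le> (\<Sum>i<c. int (card (row_turns m n c sink arr i r)))"
    using card_row_turns_sink_row[OF lay bd True] by (intro sum_mono)
  finally show ?thesis
    using True colors_with_first_turn[OF lay bd left] colors_with_first_turn[OF lay bd right]
    by simp
qed

lemma sum_card_row_turn_cells:
  assumes lay: "layout m n c sink arr" and bd: "board m n c sink"
    and rows: "\<forall>i<c. \<forall>s\<in>row_entries m n. succeeds m n c sink arr i s"
  shows "int c * int m + (int c - 2) * int (card (fst ` sink ` {..<c}))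
           \<le> (\<Sum>i<c. int (card (row_turn_cells m n c sink arr i)))"
proof -
  let ?O = "fst ` sink ` {..<c}"
  have "?O \<subseteq> {0..<int m}" using bd unfolding board_def in_grid_def by auto
  then have "{0..<int m} \<inter> ?O = ?O" and "?O \<inter> {0..<int m} = ?O" by blast+
  then have "int c * int m + (int c - 2) * int (card ?O)
      = (\<Sum>r\<in>{0..<int m}. int c + (int c - 2) * of_bool (r \<in> ?O))"
    by (simp add: sum.distrib sum_distrib_left[symmetric])
  also have "\<dots> \<le> (\<Sum>r\<in>{0..<int m}. \<Sum>i<c. int (card (row_turns m n c sink arr i r)))"
    using sum_card_row_turns[OF lay bd] rows row_entries_memI by (intro sum_mono) simp
  also have "\<dots> = (\<Sum>i<c. int (card (row_turn_cells m n c sink arr i)))"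
    by (simp add: sum.swap[of _ "{0..<int m}"] card_row_turn_cells)
  finally show ?thesis .
qed

lemma row_turn_cellsE:
  assumes "x \<in> row_turn_cells m n c sink arr i"
  obtains p d k where "(p, d) \<in> row_entries m n" and "first_turn m n c sink arr i p d k"
    and "x = ray p d k" and "d = East \<or> d = West" and "\<not> in_grid m n (ray p d (-1))"
proof -
  obtain r where r: "0 \<le> r" "r < int m" and "x \<in> row_turns m n c sink arr i r"
    using assms unfolding row_turn_cells_def by auto
  then consider k where "first_turn m n c sink arr i (r, 0) East k" "x = ray (r, 0) East k"
    | k where "first_turn m n c sink arr i (r, int n - 1) West k" "x = ray (r, int n - 1) West k"
    unfolding row_turns_def by blast
  then show ?thesis
  proof cases
    case (1 k)
    then show ?thesis
      using that[of "(r, 0)" East k] row_entries_memI[OF r] by (simp add: in_grid_def)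
  next
    case (2 k)
    then show ?thesis
      using that[of "(r, int n - 1)" West k] row_entries_memI[OF r] by (simp add: in_grid_def)
  qed
qed

lemma column_turn_cellsE:
  assumes "x \<in> prod.swap ` row_turn_cells n m c (prod.swap \<circ> sink) (transpose_layout arr) i"
  obtains p d k where "first_turn m n c sink arr i p d k"
    and "x = ray p d k" and "d = North \<or> d = South" and "\<not> in_grid m n (ray p d (-1))"
proof -
  obtain p d k where "first_turn n m c (prod.swap \<circ> sink) (transpose_layout arr) i p d k"
    and "x = prod.swap (ray p d k)" and "d = East \<or> d = West" and "\<not> in_grid n m (ray p d (-1))"
    using assms by (auto elim: row_turn_cellsE)
  moreover have "first_turn m n c sink arr i (prod.swap p) (transpose_dir d) k"
    using calculation(1) first_turn_transpose[of n m c sink arr i "prod.swap p" "transpose_dir d" k]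
    by simp
  moreover have "x = ray (prod.swap p) (transpose_dir d) k"
    and "\<not> in_grid m n (ray (prod.swap p) (transpose_dir d) (-1))"
    using calculation(2,4) by (simp_all add: ray_transpose)
  moreover have "transpose_dir d = North \<or> transpose_dir d = South"
    using calculation(3) by auto
  ultimately show ?thesis using that by blast
qed

lemma row_turn_cells_disjoint_column_turn_cells:
  assumes lay: "layout m n c sink arr" and bd: "board m n c sink" and "i < c"
    and rows: "\<forall>i<c. \<forall>s\<in>row_entries m n. succeeds m n c sink arr i s"
  shows "row_turn_cells m n c sink arr i
           \<inter> prod.swap ` row_turn_cells n m c (prod.swap \<circ> sink) (transpose_layout arr) i = {}"
proof -
  have False if row: "x \<in> row_turn_cells m n c sink arr i"
    and column: "x \<in> prod.swap ` row_turn_cells n m c (prod.swap \<circ> sink) (transpose_layout arr) i"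
    for x
  proof -
    obtain p1 d1 k1 where "(p1, d1) \<in> row_entries m n"
      and turn1: "first_turn m n c sink arr i p1 d1 k1"
      and "x = ray p1 d1 k1" and "d1 = East \<or> d1 = West" and "\<not> in_grid m n (ray p1 d1 (-1))"
      using row by (rule row_turn_cellsE)
    moreover obtain p2 d2 k2 where turn2: "first_turn m n c sink arr i p2 d2 k2"
      and "x = ray p2 d2 k2" and "d2 = North \<or> d2 = South" and "\<not> in_grid m n (ray p2 d2 (-1))"
      using column by (rule column_turn_cellsE)
    ultimately show False
      using shared_first_turn_not_succeeds[OF lay bd \<open>i < c\<close> turn1 turn2] rows \<open>i < c\<close> by auto
  qed
  then show ?thesis by blast
qed

lemma mem_arrow_cells_transpose:
  "prod.swap x \<in> arrow_cells n m (transpose_layout arr) i \<longleftrightarrow> x \<in> arrow_cells m n arr i"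
  by (simp add: arrow_cells_def transpose_layout_swap_eq_Some)

lemma card_row_and_column_turn_cells:
  assumes lay: "layout m n c sink arr" and bd: "board m n c sink" and "i < c"
    and rows: "\<forall>i<c. \<forall>s\<in>row_entries m n. succeeds m n c sink arr i s"
  shows "card (row_turn_cells m n c sink arr i)
           + card (row_turn_cells n m c (prod.swap \<circ> sink) (transpose_layout arr) i)
         \<le> card (arrow_cells m n arr i)"
proof -
  let ?R = "row_turn_cells m n c sink arr i"
  let ?C = "prod.swap ` row_turn_cells n m c (prod.swap \<circ> sink) (transpose_layout arr) i"
  have R_sub: "?R \<subseteq> arrow_cells m n arr i" by (rule row_turn_cells_subset)
  have C_sub: "?C \<subseteq> arrow_cells m n arr i"
  proof
    fix x assume "x \<in> ?C"
    then have "prod.swap x \<in> arrow_cells n m (transpose_layout arr) i"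
      using row_turn_cells_subset by fastforce
    then show "x \<in> arrow_cells m n arr i" by (simp add: mem_arrow_cells_transpose)
  qed
  have "finite ?R" using R_sub finite_arrow_cells by (rule finite_subset)
  moreover have "finite ?C" using C_sub finite_arrow_cells by (rule finite_subset)
  ultimately have "card ?R + card ?C = card (?R \<union> ?C)"
    using row_turn_cells_disjoint_column_turn_cells[OF assms] by (simp add: card_Un_disjoint)
  also have "\<dots> \<le> card (arrow_cells m n arr i)"
    using R_sub C_sub by (intro card_mono[OF finite_arrow_cells]) simp
  finally show ?thesis by (simp add: card_image)
qed

lemma sum_card_arrow_cells:
  assumes lay: "layout m n c sink arr" and bd: "board m n c sink"
  shows "(\<Sum>i<c. card (arrow_cells m n arr i)) + c \<le> m * n"
proof -
  let ?A = "\<Union>i<c. arrow_cells m n arr i"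
  let ?S = "sink ` {..<c}"
  have "card ?A = (\<Sum>i<c. card (arrow_cells m n arr i))"
  proof (rule card_UN_disjoint)
    show "\<forall>i\<in>{..<c}. \<forall>j\<in>{..<c}. i \<noteq> j \<longrightarrow> arrow_cells m n arr i \<inter> arrow_cells m n arr j = {}"
      by (auto simp: arrow_cells_def)
  qed (simp_all add: finite_arrow_cells)
  moreover have "card ?S = c"
    using bd unfolding board_def by (simp add: card_image)
  moreover have "\<not> is_sink c sink x" if "x \<in> ?A" for x
    using that lay unfolding arrow_cells_def layout_def by blast
  then have "?A \<inter> ?S = {}" unfolding is_sink_def by blast
  then have "card (?A \<union> ?S) = card ?A + card ?S"
    by (intro card_Un_disjoint) (simp_all add: finite_arrow_cells)
  moreover have "?A \<union> ?S \<subseteq> {x. in_grid m n x}"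
    using bd unfolding arrow_cells_def board_def by auto
  then have "card (?A \<union> ?S) \<le> m * n"
    using card_mono[of "{x. in_grid m n x}"] by (simp add: grid_eq_product card_cartesian_product)
  ultimately show ?thesis by linarith
qed

text \<open>The bound holds for every number of colors.\<close>

theorem mainTheorem11:
  fixes m n c :: nat and sink :: "nat \<Rightarrow> int \<times> int"
    and arr :: "int \<times> int \<Rightarrow> (nat \<times> dir) option"
  assumes "c \<ge> 2"
    and "board m n c sink"
    and "perfect m n c sink arr"
  shows "int c * (int m + int n)
           + (int c - 2) * (int (card (fst ` sink ` {..<c})) + int (card (snd ` sink ` {..<c})))
         \<le> int m * int n - int c"
proof -
  let ?sink' = "prod.swap \<circ> sink" and ?arr' = "transpose_layout arr"
  have lay: "layout m n c sink arr" and succ: "\<forall>i<c. \<forall>s\<in>entries m n. succeeds m n c sink arr i s"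
    using assms(3) unfolding perfect_def by auto
  have rows: "\<forall>i<c. \<forall>s\<in>row_entries m n. succeeds m n c sink arr i s"
    using succ unfolding entries_eq_row_entries by blast
  have columns: "\<forall>i<c. \<forall>s\<in>row_entries n m. succeeds n m c ?sink' ?arr' i s"
    using succ succeeds_transpose[of n m c sink arr _ "transpose_state _"]
    unfolding entries_eq_row_entries by simp
  have "int c * int m + (int c - 2) * int (card (fst ` sink ` {..<c}))
      \<le> (\<Sum>i<c. int (card (row_turn_cells m n c sink arr i)))"
    using sum_card_row_turn_cells[OF lay assms(2) rows] .
  moreover have "int c * int n + (int c - 2) * int (card (snd ` sink ` {..<c}))
      \<le> (\<Sum>i<c. int (card (row_turn_cells n m c ?sink' ?arr' i)))"
    using sum_card_row_turn_cells[OF layout_transpose[OF lay] board_transpose[OF assms(2)] columns]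
    by (simp add: image_comp)
  moreover have "(\<Sum>i<c. card (row_turn_cells m n c sink arr i)
      + card (row_turn_cells n m c ?sink' ?arr' i))
      \<le> (\<Sum>i<c. card (arrow_cells m n arr i))"
    using card_row_and_column_turn_cells[OF lay assms(2) _ rows] by (intro sum_mono) simp
  then have "(\<Sum>i<c. card (row_turn_cells m n c sink arr i))
      + (\<Sum>i<c. card (row_turn_cells n m c ?sink' ?arr' i)) + c \<le> m * n"
    using sum_card_arrow_cells[OF lay assms(2)] by (simp add: sum.distrib)
  then have "(\<Sum>i<c. int (card (row_turn_cells m n c sink arr i)))
      + (\<Sum>i<c. int (card (row_turn_cells n m c ?sink' ?arr' i))) + int c \<le> int m * int n"
    by (simp only: of_nat_sum[symmetric] of_nat_add[symmetric] of_nat_mult[symmetric] of_nat_le_iff)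
  ultimately show ?thesis by (simp add: algebra_simps; linarith)
qed

end
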